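(* Let $A,G$ be countable abelian groups. Then $\mathrm{PExt}(A,G)$ is the closure of $\{0\}$ in $\mathrm{Ext}(A,G)$, and $\mathrm{Ext}_{\mathrm w}(A,G)$ is a Polish group.
   Context: For countable $A,G$: $\mathsf Z(A,G)$ is the Polish group (closed in $G^{A\times A}$, $G$ discrete) of functions $c:A\times A\to G$ with $c(x,0)=0$, $c(x,y)=c(y,x)$, $c(y,z)-c(x+y,z)+c(x,y+z)-c(x,y)=0$; $\mathsf B(A,G)$ is the Polishable subgroup of coboundaries $c(x,y)=\phi(y)-\phi(x+y)+\phi(x)$ with $\phi:A\to G$, $\phi(0)=0$; $\mathsf B_{\mathrm w}(A,G)$ is the subgroup of $c\in\mathsf Z(A,G)$ such that $c|_{S\times S}\in\mathsf B(S,G)$ for every finite subgroup $S\le A$. Then $\mathrm{Ext}(A,G)=\mathsf Z(A,G)/\mathsf B(A,G)$, $\mathrm{PExt}(A,G)=\mathsf B_{\mathrm w}(A,G)/\mathsf B(A,G)$, and $\mathrm{Ext}_{\mathrm w}(A,G)=\mathsf Z(A,G)/\mathsf B_{\mathrm w}(A,G)$, regarded as groups with a Polish cover (quotients of a Polish group by a Polishable subgroup). Closure of $\{0\}$ in $\mathrm{Ext}(A,G)$ means $\overline{\mathsf B(A,G)}/\mathsf B(A,G)$; a group with a Polish cover $\hat G/N$ is a Polish group if $N$ is closed in $\hat G$. *)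

theory Defs
  imports "HOL-Analysis.Analysis" "HOL-Library.Countable"
begin

definition cocycle :: "('a::ab_group_add \<times> 'a \<Rightarrow> 'g::ab_group_add) \<Rightarrow> bool" where
  "cocycle c \<longleftrightarrow> (\<forall>x. c (x, 0) = 0) \<and> (\<forall>x y. c (x, y) = c (y, x)) \<and>
     (\<forall>x y z. c (y, z) - c (x + y, z) + c (x, y + z) - c (x, y) = 0)"

definition Zgrp :: "('a::ab_group_add \<times> 'a \<Rightarrow> 'g::ab_group_add) set" where
  "Zgrp = {c. cocycle c}"

definition coboundary_on :: "'a::ab_group_add set \<Rightarrow> ('a \<times> 'a \<Rightarrow> 'g::ab_group_add) \<Rightarrow> bool" where
  "coboundary_on S c \<longleftrightarrow> (\<exists>\<phi> :: 'a \<Rightarrow> 'g. \<phi> 0 = 0 \<and>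
      (\<forall>x\<in>S. \<forall>y\<in>S. c (x, y) = \<phi> y - \<phi> (x + y) + \<phi> x))"

definition Bgrp :: "('a::ab_group_add \<times> 'a \<Rightarrow> 'g::ab_group_add) set" where
  "Bgrp = {c. coboundary_on UNIV c}"

definition finite_subgroup :: "'a::ab_group_add set \<Rightarrow> bool" where
  "finite_subgroup S \<longleftrightarrow> finite S \<and> 0 \<in> S \<and> (\<forall>x\<in>S. \<forall>y\<in>S. x + y \<in> S) \<and> (\<forall>x\<in>S. - x \<in> S)"

definition Bw_grp :: "('a::ab_group_add \<times> 'a \<Rightarrow> 'g::ab_group_add) set" where
  "Bw_grp = {c \<in> Zgrp. \<forall>S. finite_subgroup S \<longrightarrow> coboundary_on S c}"

definition cochain_top :: "('a \<times> 'a \<Rightarrow> 'g) topology" where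
  "cochain_top = product_topology (\<lambda>_. discrete_topology UNIV) UNIV"

definition Ztop :: "('a::ab_group_add \<times> 'a \<Rightarrow> 'g::ab_group_add) topology" where
  "Ztop = subtopology cochain_top Zgrp"

end

(* Basic open sets of the product of discrete groups prescribe finitely many values, so a cocycle
   lies in the closure of the coboundaries iff on every finite set of pairs it agrees with some
   coboundary, and being a coboundary on a fixed finite subgroup is a closed condition. This gives
   the closedness of B_w and the inclusion of the closure of B in B_w.

   Conversely, a cocycle that is a coboundary on every finite subgroup is one on every finitely
   generated subgroup H, by induction on the number of generators: among the generating tuples
   g_0, ..., g_n of H choose one admitting a relation k g_n = sum_i ks_i g_i with k > 0 minimal.
   Euclid's algorithm forces k to divide every ks_i, so t = g_n - sum_i (ks_i div k) g_i has order k
   and H is the direct sum of <t> and <g_0, ..., g_(n-1)> (if there is no such relation, g_n itself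
   has infinite order and splits off). Coboundaries glue over direct sums, every symmetric cocycle
   on Z is a coboundary, and the finite cyclic case is the hypothesis. *)

theory Submission
  imports Defs
begin

primrec nmul :: "nat \<Rightarrow> 'a::ab_group_add \<Rightarrow> 'a" where
  "nmul 0 x = 0"
| "nmul (Suc n) x = x + nmul n x"

definition zmul :: "int \<Rightarrow> 'a::ab_group_add \<Rightarrow> 'a" where
  "zmul k x = nmul (nat k) x - nmul (nat (- k)) x"

lemma nmul_add: "nmul (m + n) x = nmul m x + nmul n x"
  by (induction m) (simp_all add: add.assoc)

lemma nmul_add_right: "nmul n (x + y) = nmul n x + nmul n y"
  by (induction n) (simp_all add: algebra_simps)

lemma nmul_minus_right: "nmul n (- x) = - nmul n x"
  by (induction n) (simp_all add: algebra_simps)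

lemma zmul_of_nat_diff: "zmul (int m - int n) x = nmul m x - nmul n x"
proof (cases "n \<le> m")
  case True
  then have "nmul m x = nmul (m - n) x + nmul n x"
    by (metis le_add_diff_inverse2 nmul_add)
  moreover have "nat (int m - int n) = m - n" "nat (- (int m - int n)) = 0"
    using True by simp_all
  ultimately show ?thesis
    by (simp add: zmul_def)
next
  case False
  then have "nmul n x = nmul (n - m) x + nmul m x"
    by (metis le_add_diff_inverse2 nat_le_linear nmul_add)
  moreover have "nat (int m - int n) = 0" "nat (- (int m - int n)) = n - m"
    using False by simp_all
  ultimately show ?thesis
    by (simp add: zmul_def)
qed

lemma zmul_add: "zmul (a + b) x = zmul a x + zmul b x"
proof -
  have "a + b = int (nat a + nat b) - int (nat (- a) + nat (- b))"
    by simp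
  then have "zmul (a + b) x = nmul (nat a + nat b) x - nmul (nat (- a) + nat (- b)) x"
    by (metis zmul_of_nat_diff)
  then show ?thesis
    by (simp add: zmul_def nmul_add)
qed

lemma zmul_0 [simp]: "zmul 0 x = 0"
  by (simp add: zmul_def)

lemma zmul_1 [simp]: "zmul 1 x = x"
  by (simp add: zmul_def)

lemma zmul_zero_right [simp]: "zmul k 0 = 0"
proof -
  have "nmul n (0::'a) = 0" for n
    by (induction n) simp_all
  then show ?thesis
    by (simp add: zmul_def)
qed

lemma zmul_minus: "zmul (- a) x = - zmul a x"
  by (simp add: zmul_def)

lemma zmul_diff: "zmul (a - b) x = zmul a x - zmul b x"
  using zmul_add[of a "- b" x] by (simp add: zmul_minus)

lemma zmul_add_right: "zmul k (x + y) = zmul k x + zmul k y"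
  by (simp add: zmul_def nmul_add_right)

lemma zmul_minus_right: "zmul k (- x) = - zmul k x"
  by (simp add: zmul_def nmul_minus_right)

lemma zmul_diff_right: "zmul k (x - y) = zmul k x - zmul k y"
  using zmul_add_right[of k x "- y"] by (simp add: zmul_minus_right)

lemma zmul_sum_right: "zmul k (sum f A) = (\<Sum>i\<in>A. zmul k (f i))"
  by (induction A rule: infinite_finite_induct) (simp_all add: zmul_add_right)

lemma zmul_mult: "zmul (a * b) x = zmul a (zmul b x)"
proof (induction a rule: int_induct[where k = 0])
  case (step1 i)
  then show ?case
    by (simp add: distrib_right zmul_add)
next
  case (step2 i)
  then show ?case
    by (simp add: left_diff_distrib zmul_diff)
qed simp

lemma zmul_mod:
  assumes "zmul k x = 0"
  shows "zmul (a mod k) x = zmul a x"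
proof -
  have "zmul a x = zmul (k * (a div k)) x + zmul (a mod k) x"
    by (metis div_mult_mod_eq mult.commute zmul_add)
  with assms show ?thesis
    by (simp add: zmul_mult mult.commute[of k])
qed

definition is_subgroup :: "'a::ab_group_add set \<Rightarrow> bool" where
  "is_subgroup S \<longleftrightarrow> 0 \<in> S \<and> (\<forall>x\<in>S. \<forall>y\<in>S. x + y \<in> S) \<and> (\<forall>x\<in>S. - x \<in> S)"

lemma finite_subgroup_iff: "finite_subgroup S \<longleftrightarrow> finite S \<and> is_subgroup S"
  by (auto simp: finite_subgroup_def is_subgroup_def)

lemma is_subgroup_zero: "is_subgroup S \<Longrightarrow> 0 \<in> S"
  by (simp add: is_subgroup_def)

lemma is_subgroup_add: "is_subgroup S \<Longrightarrow> x \<in> S \<Longrightarrow> y \<in> S \<Longrightarrow> x + y \<in> S"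
  by (simp add: is_subgroup_def)

lemma is_subgroup_minus: "is_subgroup S \<Longrightarrow> x \<in> S \<Longrightarrow> - x \<in> S"
  by (simp add: is_subgroup_def)

lemma is_subgroup_diff: "is_subgroup S \<Longrightarrow> x \<in> S \<Longrightarrow> y \<in> S \<Longrightarrow> x - y \<in> S"
  by (metis diff_conv_add_uminus is_subgroup_add is_subgroup_minus)

lemma is_subgroup_zmul: "is_subgroup S \<Longrightarrow> x \<in> S \<Longrightarrow> zmul k x \<in> S"
proof -
  assume S: "is_subgroup S" and x: "x \<in> S"
  have "nmul n x \<in> S" for n
    by (induction n) (simp_all add: S x is_subgroup_zero is_subgroup_add)
  then show ?thesis
    by (simp add: zmul_def S is_subgroup_diff)
qed

lemma is_subgroup_sum: "is_subgroup S \<Longrightarrow> (\<And>i. i \<in> A \<Longrightarrow> f i \<in> S) \<Longrightarrow> sum f A \<in> S"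
  by (induction A rule: infinite_finite_induct) (auto simp: is_subgroup_zero is_subgroup_add)

definition cyclic :: "'a::ab_group_add \<Rightarrow> 'a set" where
  "cyclic t = range (\<lambda>a. zmul a t)"

lemma is_subgroup_cyclic: "is_subgroup (cyclic t)"
proof -
  have "zmul a t + zmul b t \<in> cyclic t" "- zmul a t \<in> cyclic t" for a b
    unfolding cyclic_def by (metis rangeI zmul_add, metis rangeI zmul_minus)
  moreover have "0 \<in> cyclic t"
    unfolding cyclic_def by (metis rangeI zmul_0)
  ultimately show ?thesis
    unfolding is_subgroup_def by (auto simp: cyclic_def)
qed

lemma finite_cyclic:
  assumes "0 < k" "zmul k t = 0"
  shows "finite (cyclic t)"
proof -
  have "zmul a t \<in> (\<lambda>r. zmul r t) ` {0..<k}" for a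
    using assms zmul_mod[OF assms(2), of a] by (intro image_eqI[of _ _ "a mod k"]) simp_all
  then have "cyclic t \<subseteq> (\<lambda>r. zmul r t) ` {0..<k}"
    unfolding cyclic_def by blast
  then show ?thesis
    using finite_subset by blast
qed

definition zspan :: "nat \<Rightarrow> (nat \<Rightarrow> 'a::ab_group_add) \<Rightarrow> 'a set" where
  "zspan n g = range (\<lambda>ks. \<Sum>i<n. zmul (ks i) (g i))"

lemma is_subgroup_zspan: "is_subgroup (zspan n g)"
  unfolding is_subgroup_def zspan_def
proof (intro conjI ballI)
  show "0 \<in> range (\<lambda>ks. \<Sum>i<n. zmul (ks i) (g i))"
    by (rule range_eqI[of _ _ "\<lambda>_. 0"]) simp
next
  fix x y
  assume "x \<in> range (\<lambda>ks. \<Sum>i<n. zmul (ks i) (g i))" "y \<in> range (\<lambda>ks. \<Sum>i<n. zmul (ks i) (g i))"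
  then obtain ks ls where "x = (\<Sum>i<n. zmul (ks i) (g i))" "y = (\<Sum>i<n. zmul (ls i) (g i))"
    by auto
  then show "x + y \<in> range (\<lambda>ks. \<Sum>i<n. zmul (ks i) (g i))"
    by (intro range_eqI[of _ _ "\<lambda>i. ks i + ls i"]) (simp add: zmul_add sum.distrib)
next
  fix x
  assume "x \<in> range (\<lambda>ks. \<Sum>i<n. zmul (ks i) (g i))"
  then obtain ks where "x = (\<Sum>i<n. zmul (ks i) (g i))"
    by auto
  then show "- x \<in> range (\<lambda>ks. \<Sum>i<n. zmul (ks i) (g i))"
    by (intro range_eqI[of _ _ "\<lambda>i. - ks i"]) (simp add: zmul_minus sum_negf)
qed

lemma zspan_generator:
  assumes "i < n"
  shows "g i \<in> zspan n g"
proof -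
  have "(\<Sum>j<n. zmul (if j = i then 1 else 0) (g j)) = (\<Sum>j<n. if j = i then g j else 0)"
    by (intro sum.cong) auto
  also have "\<dots> = g i"
    using assms by simp
  finally have "(\<Sum>j<n. zmul (if j = i then 1 else 0) (g j)) = g i" .
  then show ?thesis
    unfolding zspan_def by (intro range_eqI[of _ _ "\<lambda>j. if j = i then 1 else 0"]) simp
qed

lemma zspan_subset: "is_subgroup S \<Longrightarrow> (\<And>i. i < n \<Longrightarrow> g i \<in> S) \<Longrightarrow> zspan n g \<subseteq> S"
  unfolding zspan_def by (auto intro!: is_subgroup_sum is_subgroup_zmul)

lemma zspan_eqI:
  assumes "\<And>i. i < n \<Longrightarrow> g i \<in> zspan n h" "\<And>i. i < n \<Longrightarrow> h i \<in> zspan n g"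
  shows "zspan n g = zspan n h"
  using assms by (intro equalityI zspan_subset is_subgroup_zspan) auto

lemma zspan_cong: "(\<And>i. i < n \<Longrightarrow> g i = h i) \<Longrightarrow> zspan n g = zspan n h"
  unfolding zspan_def by (intro image_cong refl sum.cong) auto

lemma zspan_Suc_mono: "zspan n g \<subseteq> zspan (Suc n) g"
  by (intro zspan_subset is_subgroup_zspan zspan_generator) simp

lemma zspan_0: "zspan 0 g = {0}"
  by (simp add: zspan_def)

lemma zspan_Suc: "zspan (Suc n) g = cyclic (g n) + zspan n g"
proof (intro equalityI subsetI)
  fix x
  assume "x \<in> zspan (Suc n) g"
  then obtain ks where "x = zmul (ks n) (g n) + (\<Sum>i<n. zmul (ks i) (g i))"
    unfolding zspan_def by (auto simp: add.commute)
  then show "x \<in> cyclic (g n) + zspan n g"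
    unfolding zspan_def cyclic_def by (simp add: set_plus_intro)
next
  fix x
  assume "x \<in> cyclic (g n) + zspan n g"
  then obtain a ks where x: "x = zmul a (g n) + (\<Sum>i<n. zmul (ks i) (g i))"
    unfolding zspan_def cyclic_def by (auto elim: set_plus_elim)
  have "(\<Sum>i<n. zmul (ks i) (g i)) = (\<Sum>i<n. zmul ((ks(n := a)) i) (g i))"
    by (intro sum.cong) auto
  then have "x = (\<Sum>i<Suc n. zmul ((ks(n := a)) i) (g i))"
    by (simp add: x add.commute)
  then show "x \<in> zspan (Suc n) g"
    unfolding zspan_def by blast
qed

lemma finite_subset_zspan:
  assumes "finite X"
  shows "\<exists>n g. X \<subseteq> zspan n g"
proof -
  obtain g where "bij_betw g {0..<card X} X"
    using ex_bij_betw_nat_finite[OF assms] by blast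
  then have "X \<subseteq> g ` {0..<card X}"
    by (simp add: bij_betw_imp_surj_on)
  also have "\<dots> \<subseteq> zspan (card X) g"
    using zspan_generator[of _ "card X" g] by auto
  finally have "X \<subseteq> zspan (card X) g" .
  then show ?thesis
    by blast
qed

definition relation_coeff :: "'a::ab_group_add set \<Rightarrow> nat \<Rightarrow> int \<Rightarrow> bool" where
  "relation_coeff H n k \<longleftrightarrow> (\<exists>g. zspan (Suc n) g = H \<and> zmul k (g n) \<in> zspan n g)"

lemma relation_coeff_minus: "relation_coeff H n k \<Longrightarrow> relation_coeff H n (- k)"
  unfolding relation_coeff_def by (auto simp: zmul_minus intro: is_subgroup_minus is_subgroup_zspan)

lemma zspan_Suc_update_last:
  assumes "x \<in> zspan n g"
  shows "zspan (Suc n) (g(n := g n - x)) = zspan (Suc n) g"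
proof (rule zspan_eqI)
  fix i
  assume "i < Suc n"
  then show "(g(n := g n - x)) i \<in> zspan (Suc n) g"
    using assms zspan_Suc_mono
    by (auto intro!: is_subgroup_diff is_subgroup_zspan zspan_generator)
next
  fix i
  assume i: "i < Suc n"
  define h where "h = g(n := g n - x)"
  have "x \<in> zspan (Suc n) h"
    using assms zspan_Suc_mono zspan_cong[of n h g] by (auto simp: h_def)
  then have "g n \<in> zspan (Suc n) h"
    using is_subgroup_add[OF is_subgroup_zspan zspan_generator[of n "Suc n" h]]
    by (force simp: h_def)
  moreover have "g i \<in> zspan (Suc n) h" if "i \<noteq> n"
    using zspan_generator[OF i, of h] that by (simp add: h_def)
  ultimately show "g i \<in> zspan (Suc n) (g(n := g n - x))"
    unfolding h_def by blast
qed

lemma zspan_Suc_exchange: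
  assumes j: "j < n"
  shows "zspan (Suc n) (g(j := g n - zmul q (g j), n := g j)) = zspan (Suc n) g"
    (is "zspan (Suc n) ?h = _")
proof (rule zspan_eqI)
  fix i
  assume "i < Suc n"
  then show "?h i \<in> zspan (Suc n) g"
    using j by (cases "i = n"; cases "i = j")
      (auto intro!: is_subgroup_diff is_subgroup_zmul is_subgroup_zspan zspan_generator)
next
  fix i
  assume i: "i < Suc n"
  have gj: "g j \<in> zspan (Suc n) ?h"
    using zspan_generator[of n "Suc n" ?h] by simp
  have "?h j + zmul q (?h n) \<in> zspan (Suc n) ?h"
    using j by (intro is_subgroup_add is_subgroup_zmul is_subgroup_zspan zspan_generator) simp_all
  moreover have "?h j + zmul q (?h n) = g n"
    using j by simp
  ultimately have gn: "g n \<in> zspan (Suc n) ?h"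
    by simp
  show "g i \<in> zspan (Suc n) ?h"
    using i gj gn zspan_generator[of i "Suc n" ?h] by (cases "i = n \<or> i = j") auto
qed

text \<open>A Euclidean step on a relation \<open>k g\<^sub>n = \<Sum>\<^sub>i ks\<^sub>i g\<^sub>i\<close>: with \<open>ks\<^sub>j = q k + r\<close>, the generators
  \<open>g\<^sub>n - q g\<^sub>j\<close> (in place of \<open>g\<^sub>j\<close>) and \<open>g\<^sub>j\<close> (in place of \<open>g\<^sub>n\<close>) satisfy a relation with last
  coefficient \<open>r\<close>.\<close>

lemma relation_coeff_mod:
  assumes rel: "zmul k (g n) = (\<Sum>i<n. zmul (ks i) (g i))" and j: "j < n"
  shows "relation_coeff (zspan (Suc n) g) n (ks j mod k)"
proof -
  define q where "q = ks j div k"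
  define h where "h = g(j := g n - zmul q (g j), n := g j)"
  have span: "zspan (Suc n) h = zspan (Suc n) g"
    unfolding h_def by (rule zspan_Suc_exchange[OF j])
  have hj: "h j = g n - zmul q (g j)" and hn: "h n = g j" and hi: "\<And>i. i \<noteq> j \<Longrightarrow> i \<noteq> n \<Longrightarrow> h i = g i"
    using j by (simp_all add: h_def)
  define rest where "rest = (\<Sum>i\<in>{..<n} - {j}. zmul (ks i) (g i))"
  have rest: "rest \<in> zspan n h"
    unfolding rest_def
  proof (intro is_subgroup_sum is_subgroup_zmul is_subgroup_zspan)
    fix i
    assume "i \<in> {..<n} - {j}"
    then show "g i \<in> zspan n h"
      using zspan_generator[of i n h] hi[of i] by simp
  qed
  have "zmul (ks j) (g j) = zmul k (g n) - rest"
    using rel j by (simp add: rest_def sum.remove[of "{..<n}" j])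
  moreover have "ks j mod k = ks j - k * q"
    by (simp add: q_def minus_div_mult_eq_mod[symmetric] mult.commute)
  ultimately have "zmul (ks j mod k) (h n) = zmul k (h j) - rest"
    by (simp add: hn hj zmul_diff zmul_diff_right zmul_mult)
  then have "zmul (ks j mod k) (h n) \<in> zspan n h"
    using rest j by (auto intro!: is_subgroup_diff is_subgroup_zmul is_subgroup_zspan zspan_generator)
  with span show ?thesis
    unfolding relation_coeff_def by blast
qed

lemma cyclic_inter_zspan_trivial:
  assumes "\<And>k. 0 < k \<Longrightarrow> \<not> relation_coeff (zspan (Suc n) g) n k"
  shows "cyclic (g n) \<inter> zspan n g \<subseteq> {0}"
proof
  fix x
  assume "x \<in> cyclic (g n) \<inter> zspan n g"
  then obtain a where x: "x = zmul a (g n)" and "zmul a (g n) \<in> zspan n g"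
    unfolding cyclic_def by blast
  then have "relation_coeff (zspan (Suc n) g) n a"
    unfolding relation_coeff_def by blast
  then have "\<not> 0 < a" "\<not> 0 < - a"
    using assms relation_coeff_minus by blast+
  then have "a = 0"
    by simp
  then show "x \<in> {0}"
    by (simp add: x)
qed

lemma zspan_Suc_torsion_last:
  assumes rel: "zmul k (g n) = (\<Sum>i<n. zmul (ks i) (g i))" and dvd: "\<And>j. j < n \<Longrightarrow> k dvd ks j"
  shows "\<exists>h. zspan (Suc n) h = zspan (Suc n) g \<and> zmul k (h n) = 0"
proof -
  define s where "s = (\<Sum>j<n. zmul (ks j div k) (g j))"
  have s: "s \<in> zspan n g"
    unfolding s_def by (intro is_subgroup_sum is_subgroup_zmul is_subgroup_zspan zspan_generator) simp
  have "zmul k (zmul (ks j div k) (g j)) = zmul (ks j) (g j)" if "j < n" for j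
    using dvd[OF that] by (simp add: zmul_mult[symmetric])
  then have "zmul k s = zmul k (g n)"
    unfolding s_def zmul_sum_right rel by (intro sum.cong refl) simp
  then have "zmul k ((g(n := g n - s)) n) = 0"
    by (simp add: zmul_diff_right)
  with zspan_Suc_update_last[OF s] show ?thesis
    by blast
qed

lemma minimal_relation_coeff_mod:
  assumes "relation_coeff H n (a mod k)" and "0 < k"
    and minimal: "\<And>l. 0 < l \<Longrightarrow> l < k \<Longrightarrow> \<not> relation_coeff H n l"
  shows "a mod k = 0"
proof -
  have "0 \<le> a mod k" "a mod k < k"
    using \<open>0 < k\<close> by simp_all
  with minimal[of "a mod k"] \<open>relation_coeff H n (a mod k)\<close> show ?thesis
    by linarith
qed

lemma zspan_Suc_complement_minimal:
  assumes k: "0 < k" "relation_coeff H n k"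
    and minimal: "\<And>l. 0 < l \<Longrightarrow> l < k \<Longrightarrow> \<not> relation_coeff H n l"
  shows "\<exists>h. zspan (Suc n) h = H \<and> cyclic (h n) \<inter> zspan n h \<subseteq> {0}"
proof -
  obtain g where H: "zspan (Suc n) g = H" and "zmul k (g n) \<in> zspan n g"
    using k(2) unfolding relation_coeff_def by auto
  then obtain ks where rel: "zmul k (g n) = (\<Sum>i<n. zmul (ks i) (g i))"
    unfolding zspan_def by auto
  have "k dvd ks j" if "j < n" for j
  proof -
    have "relation_coeff H n (ks j mod k)"
      using relation_coeff_mod[OF rel that] H by simp
    then have "ks j mod k = 0"
      using k(1) minimal by (rule minimal_relation_coeff_mod)
    then show ?thesis
      by (simp add: dvd_eq_mod_eq_0)
  qed
  then obtain h where span: "zspan (Suc n) h = H" and order: "zmul k (h n) = 0"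
    using zspan_Suc_torsion_last[OF rel] H by blast
  have "cyclic (h n) \<inter> zspan n h \<subseteq> {0}"
  proof
    fix x
    assume x: "x \<in> cyclic (h n) \<inter> zspan n h"
    then obtain a where xa: "x = zmul a (h n)"
      unfolding cyclic_def by auto
    with x have "zmul (a mod k) (h n) \<in> zspan n h"
      by (simp add: zmul_mod[OF order])
    then have "relation_coeff H n (a mod k)"
      unfolding relation_coeff_def using span by (intro exI[of _ h]) simp
    then have "a mod k = 0"
      using k(1) minimal by (rule minimal_relation_coeff_mod)
    then show "x \<in> {0}"
      using xa zmul_mod[OF order, of a] by simp
  qed
  with span show ?thesis
    by blast
qed

lemma zspan_Suc_complement:
  "\<exists>h. zspan (Suc n) h = zspan (Suc n) g \<and> cyclic (h n) \<inter> zspan n h \<subseteq> {0}"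
proof (cases "\<exists>m::nat. 0 < m \<and> relation_coeff (zspan (Suc n) g) n (int m)")
  case True
  then obtain m :: nat where m: "0 < m" "relation_coeff (zspan (Suc n) g) n (int m)"
    and least: "\<And>m'. m' < m \<Longrightarrow> \<not> (0 < m' \<and> relation_coeff (zspan (Suc n) g) n (int m'))"
    using exists_least_iff[of "\<lambda>m. 0 < m \<and> relation_coeff (zspan (Suc n) g) n (int m)"] by blast
  have "\<not> relation_coeff (zspan (Suc n) g) n l" if "0 < l" "l < int m" for l
    using least[of "nat l"] that by simp
  with m show ?thesis
    by (intro zspan_Suc_complement_minimal[of "int m"]) simp_all
next
  case False
  then have "\<not> relation_coeff (zspan (Suc n) g) n k" if "0 < k" for k
    using spec[OF False[unfolded not_ex], of "nat k"] that by simp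
  then show ?thesis
    using cyclic_inter_zspan_trivial by blast
qed

lemma cocycle_zero_right: "cocycle c \<Longrightarrow> c (x, 0) = 0"
  unfolding cocycle_def by blast

lemma cocycle_commute: "cocycle c \<Longrightarrow> c (x, y) = c (y, x)"
  unfolding cocycle_def by blast

lemma cocycle_assoc:
  assumes "cocycle c"
  shows "c (y, z) + c (x, y + z) = c (x + y, z) + c (x, y)"
proof -
  have "c (y, z) - c (x + y, z) + c (x, y + z) - c (x, y) = 0"
    using assms unfolding cocycle_def by blast
  then show ?thesis
    by (simp add: algebra_simps)
qed

lemma cocycle_interchange:
  assumes c: "cocycle c"
  shows "c (a + b, a' + b') + c (a, b) + c (a', b') = c (a, a') + c (b, b') + c (a + a', b + b')"
proof -
  have "c (a + b, a' + b') + c (a, b) + c (a', b') = c (b, a' + b') + c (a, b + (a' + b')) + c (a', b')"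
    using cocycle_assoc[OF c, of b "a' + b'" a] by simp
  also have "\<dots> = c (a' + b, b') + c (a', b) + c (a, b + (a' + b'))"
    using cocycle_assoc[OF c, of a' b' b] cocycle_commute[OF c, of b a'] by (simp add: algebra_simps)
  also have "\<dots> = c (b, b') + c (a', b + b') + c (a, a' + (b + b'))"
    using cocycle_assoc[OF c, of b b' a'] by (simp add: algebra_simps)
  also have "\<dots> = c (a, a') + c (b, b') + c (a + a', b + b')"
    using cocycle_assoc[OF c, of a' "b + b'" a] by (simp add: algebra_simps)
  finally show ?thesis .
qed

lemma coboundary_onI:
  assumes c: "cocycle c" and "0 \<in> S"
    and \<phi>: "\<And>x y. x \<in> S \<Longrightarrow> y \<in> S \<Longrightarrow> c (x, y) = \<phi> y - \<phi> (x + y) + \<phi> x"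
  shows "coboundary_on S c"
proof -
  have "\<phi> 0 = 0"
    using \<phi>[of 0 0] \<open>0 \<in> S\<close> cocycle_zero_right[OF c, of 0] by simp
  with \<phi> show ?thesis
    unfolding coboundary_on_def by blast
qed

lemma direct_sum_unique:
  assumes T: "is_subgroup T" and K: "is_subgroup K" and TK: "T \<inter> K \<subseteq> {0}"
    and "u \<in> T" "x \<in> K" "u' \<in> T" "x' \<in> K" "u + x = u' + x'"
  shows "u = u' \<and> x = x'"
proof -
  have "u - u' = x' - x"
    using \<open>u + x = u' + x'\<close> by (simp add: algebra_simps)
  moreover have "u - u' \<in> T" "x' - x \<in> K"
    using assms by (simp_all add: is_subgroup_diff)
  ultimately show ?thesis
    using TK by auto
qed

lemma coboundary_on_direct_sum:
  assumes c: "cocycle c" and T: "is_subgroup T" and K: "is_subgroup K" and TK: "T \<inter> K \<subseteq> {0}"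
    and "coboundary_on T c" "coboundary_on K c"
  shows "coboundary_on (T + K) c"
proof -
  obtain \<phi>1 where \<phi>1: "\<And>u u'. u \<in> T \<Longrightarrow> u' \<in> T \<Longrightarrow> c (u, u') = \<phi>1 u' - \<phi>1 (u + u') + \<phi>1 u"
    using \<open>coboundary_on T c\<close> unfolding coboundary_on_def by blast
  obtain \<phi>2 where \<phi>2: "\<And>x x'. x \<in> K \<Longrightarrow> x' \<in> K \<Longrightarrow> c (x, x') = \<phi>2 x' - \<phi>2 (x + x') + \<phi>2 x"
    using \<open>coboundary_on K c\<close> unfolding coboundary_on_def by blast
  define \<phi> where "\<phi> z = (THE v. \<exists>u\<in>T. \<exists>x\<in>K. z = u + x \<and> v = \<phi>1 u + \<phi>2 x - c (u, x))" for z
  have \<phi>: "\<phi> (u + x) = \<phi>1 u + \<phi>2 x - c (u, x)" if "u \<in> T" "x \<in> K" for u x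
    unfolding \<phi>_def
  proof (rule the_equality)
    show "\<exists>u'\<in>T. \<exists>x'\<in>K. u + x = u' + x' \<and> \<phi>1 u + \<phi>2 x - c (u, x) = \<phi>1 u' + \<phi>2 x' - c (u', x')"
      using that by blast
  next
    fix v
    assume "\<exists>u'\<in>T. \<exists>x'\<in>K. u + x = u' + x' \<and> v = \<phi>1 u' + \<phi>2 x' - c (u', x')"
    then show "v = \<phi>1 u + \<phi>2 x - c (u, x)"
      using direct_sum_unique[OF T K TK that] by auto
  qed
  show ?thesis
  proof (rule coboundary_onI[OF c])
    show "0 \<in> T + K"
      using set_plus_intro[OF is_subgroup_zero[OF T] is_subgroup_zero[OF K]] by simp
  next
    fix z z'
    assume "z \<in> T + K" "z' \<in> T + K"
    then obtain u x u' x' where z: "z = u + x" "z' = u' + x'"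
      and mem: "u \<in> T" "x \<in> K" "u' \<in> T" "x' \<in> K"
      by (auto elim!: set_plus_elim)
    have "z + z' = (u + u') + (x + x')"
      by (simp add: z algebra_simps)
    then have "\<phi> (z + z') = \<phi>1 (u + u') + \<phi>2 (x + x') - c (u + u', x + x')"
      using mem T K by (simp add: \<phi> is_subgroup_add)
    then have "\<phi> z' - \<phi> (z + z') + \<phi> z
        = c (u, u') + c (x, x') + c (u + u', x + x') - c (u, x) - c (u', x')"
      using mem by (simp add: z \<phi> \<phi>1 \<phi>2 algebra_simps)
    moreover have "c (z, z') = c (u, u') + c (x, x') + c (u + u', x + x') - c (u, x) - c (u', x')"
      using cocycle_interchange[OF c, of u x u' x'] by (simp add: z eq_diff_eq ac_simps)
    ultimately show "c (z, z') = \<phi> z' - \<phi> (z + z') + \<phi> z"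
      by simp
  qed
qed

definition int_cocycle_potential :: "(int \<times> int \<Rightarrow> 'g::ab_group_add) \<Rightarrow> int \<Rightarrow> 'g" where
  "int_cocycle_potential d a =
     (if 0 \<le> a then (\<Sum>i\<in>{0..<a}. d (i, 1)) else - (\<Sum>i\<in>{a..<0}. d (i, 1)))"

lemma int_cocycle_potential_succ:
  "int_cocycle_potential d (a + 1) = int_cocycle_potential d a + d (a, 1)"
proof (cases "0 \<le> a")
  case True
  then have "{0..<a + 1} = insert a {0..<a}"
    by auto
  with True show ?thesis
    by (simp add: int_cocycle_potential_def add.commute)
next
  case False
  then have "{a..<0} = insert a {a + 1..<0}"
    by auto
  with False show ?thesis
    by (simp add: int_cocycle_potential_def)
qed

lemma int_cocycle_potential_add:
  assumes d: "cocycle d"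
  shows "int_cocycle_potential d (a + b) = int_cocycle_potential d a + int_cocycle_potential d b + d (a, b)"
proof -
  let ?P = "int_cocycle_potential d"
  have shift: "?P (a + (b + 1)) - ?P a - ?P (b + 1) - d (a, b + 1) = ?P (a + b) - ?P a - ?P b - d (a, b)"
    for b
    using int_cocycle_potential_succ[of d "a + b"] int_cocycle_potential_succ[of d b]
      cocycle_assoc[OF d, of b 1 a]
    by (simp add: add.assoc algebra_simps)
  have "?P (a + b) - ?P a - ?P b - d (a, b) = 0"
  proof (induction b rule: int_induct[where k = 0])
    case base
    show ?case
      by (simp add: int_cocycle_potential_def cocycle_zero_right[OF d])
  next
    case (step1 b)
    then show ?case
      using shift[of b] by simp
  next
    case (step2 b)
    then show ?case
      using shift[of "b - 1"] by simp
  qed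
  then show ?thesis
    by (simp add: diff_eq_eq)
qed

lemma int_cocycle_is_coboundary:
  fixes d :: "int \<times> int \<Rightarrow> 'g::ab_group_add"
  assumes d: "cocycle d"
  shows "coboundary_on UNIV d"
proof (rule coboundary_onI[OF d, where \<phi> = "\<lambda>a. - int_cocycle_potential d a"])
  fix x y :: int
  show "d (x, y) = - int_cocycle_potential d y - - int_cocycle_potential d (x + y) + - int_cocycle_potential d x"
    by (simp add: int_cocycle_potential_add[OF d])
qed simp

lemma cocycle_comp_additive:
  assumes c: "cocycle c" and f: "\<And>x y. f (x + y) = f x + f y"
  shows "cocycle (\<lambda>(x, y). c (f x, f y))"
proof -
  have "f 0 = 0"
    using f[of 0 0] by simp
  show ?thesis
    unfolding cocycle_def split
  proof (intro conjI allI)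
    show "c (f x, f 0) = 0" for x
      by (simp add: \<open>f 0 = 0\<close> cocycle_zero_right[OF c])
    show "c (f x, f y) = c (f y, f x)" for x y
      by (rule cocycle_commute[OF c])
    show "c (f y, f z) - c (f (x + y), f z) + c (f x, f (y + z)) - c (f x, f y) = 0" for x y z
      using c unfolding cocycle_def f by blast
  qed
qed

lemma coboundary_on_cyclic_inj:
  assumes c: "cocycle c" and inj: "inj (\<lambda>a. zmul a t)"
  shows "coboundary_on (cyclic t) c"
proof -
  have "cocycle (\<lambda>(a, b). c (zmul a t, zmul b t))"
    using cocycle_comp_additive[OF c, of "\<lambda>a. zmul a t"] by (simp add: zmul_add)
  then obtain \<psi> where \<psi>: "\<And>a b. c (zmul a t, zmul b t) = \<psi> b - \<psi> (a + b) + \<psi> a"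
    using int_cocycle_is_coboundary unfolding coboundary_on_def by fastforce
  show ?thesis
  proof (rule coboundary_onI[OF c, where \<phi> = "\<psi> \<circ> inv (\<lambda>a. zmul a t)"])
    show "0 \<in> cyclic t"
      by (rule is_subgroup_zero[OF is_subgroup_cyclic])
  next
    fix x y
    assume "x \<in> cyclic t" "y \<in> cyclic t"
    then obtain a b where "x = zmul a t" "y = zmul b t"
      unfolding cyclic_def by auto
    moreover have "x + y = zmul (a + b) t"
      by (simp add: calculation zmul_add)
    ultimately show "c (x, y) = (\<psi> \<circ> inv (\<lambda>a. zmul a t)) y - (\<psi> \<circ> inv (\<lambda>a. zmul a t)) (x + y)
        + (\<psi> \<circ> inv (\<lambda>a. zmul a t)) x"
      by (simp add: inv_f_f[OF inj] \<psi>)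
  qed
qed

lemma coboundary_on_cyclic:
  assumes c: "cocycle c" and finite: "\<And>S. finite_subgroup S \<Longrightarrow> coboundary_on S c"
  shows "coboundary_on (cyclic t) c"
proof (cases "inj (\<lambda>a. zmul a t)")
  case True
  then show ?thesis
    by (rule coboundary_on_cyclic_inj[OF c])
next
  case False
  then obtain a b where "a \<noteq> b" "zmul a t = zmul b t"
    unfolding inj_def by blast
  then have "0 < \<bar>a - b\<bar>" "zmul \<bar>a - b\<bar> t = 0"
    by (simp_all add: abs_if zmul_diff zmul_minus)
  then have "finite (cyclic t)"
    by (rule finite_cyclic)
  then show ?thesis
    using finite is_subgroup_cyclic finite_subgroup_iff by blast
qed

lemma coboundary_on_zspan:
  assumes c: "cocycle c" and finite: "\<And>S. finite_subgroup S \<Longrightarrow> coboundary_on S c"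
  shows "coboundary_on (zspan n g) c"
proof (induction n arbitrary: g)
  case 0
  show ?case
    unfolding zspan_0 by (rule coboundary_onI[OF c, of _ "\<lambda>_. 0"]) (simp_all add: cocycle_zero_right[OF c])
next
  case (Suc n)
  obtain h where h: "zspan (Suc n) h = zspan (Suc n) g" and inter: "cyclic (h n) \<inter> zspan n h \<subseteq> {0}"
    using zspan_Suc_complement by blast
  have "coboundary_on (cyclic (h n) + zspan n h) c"
    using coboundary_on_direct_sum[OF c is_subgroup_cyclic is_subgroup_zspan inter
        coboundary_on_cyclic[OF c finite] Suc.IH] .
  then show ?case
    by (simp add: zspan_Suc[symmetric] h)
qed

lemma topspace_cochain_top [simp]: "topspace cochain_top = UNIV"
  by (simp add: cochain_top_def PiE_UNIV_domain)

lemma topspace_Ztop [simp]: "topspace Ztop = Zgrp"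
  by (simp add: Ztop_def)

lemma openin_cochain_top_agree:
  assumes "finite F"
  shows "openin cochain_top {b. \<forall>p\<in>F. b p = c p}"
proof -
  have "{b. \<forall>p\<in>F. b p = c p} = PiE UNIV (\<lambda>p. if p \<in> F then {c p} else UNIV)"
  proof (intro equalityI subsetI)
    fix b
    assume "b \<in> {b. \<forall>p\<in>F. b p = c p}"
    then show "b \<in> PiE UNIV (\<lambda>p. if p \<in> F then {c p} else UNIV)"
      by (simp add: PiE_UNIV_domain)
  next
    fix b
    assume b: "b \<in> PiE UNIV (\<lambda>p. if p \<in> F then {c p} else UNIV)"
    have "b p = c p" if "p \<in> F" for p
      using PiE_mem[OF b UNIV_I, of p] that by simp
    then show "b \<in> {b. \<forall>p\<in>F. b p = c p}"
      by simp
  qed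
  moreover have "finite {p. (if p \<in> F then {c p} else UNIV) \<noteq> UNIV}"
    by (rule finite_subset[OF _ assms]) auto
  ultimately show ?thesis
    unfolding cochain_top_def by (simp add: openin_PiE_gen)
qed

lemma openin_cochain_top_imp_agree:
  assumes "openin cochain_top T" "c \<in> T"
  obtains F where "finite F" "{b. \<forall>p\<in>F. b p = c p} \<subseteq> T"
proof -
  obtain U where fin: "finite {p. U p \<noteq> UNIV}" and c: "c \<in> PiE UNIV U" and UT: "PiE UNIV U \<subseteq> T"
    using assms unfolding cochain_top_def openin_product_topology_alt by auto
  have "b \<in> PiE UNIV U" if agree: "\<forall>p\<in>{p. U p \<noteq> UNIV}. b p = c p" for b
  proof -
    have "b p \<in> U p" for p
    proof (cases "U p = UNIV")
      case False
      then have "b p = c p"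
        using agree by blast
      with PiE_mem[OF c UNIV_I] show ?thesis
        by simp
    qed simp
    then show ?thesis
      by (simp add: PiE_UNIV_domain)
  qed
  show ?thesis
  proof (rule that[OF fin])
    show "{b. \<forall>p\<in>{p. U p \<noteq> UNIV}. b p = c p} \<subseteq> T"
      using UT \<open>\<And>b. \<forall>p\<in>{p. U p \<noteq> UNIV}. b p = c p \<Longrightarrow> b \<in> PiE UNIV U\<close> by blast
  qed
qed

lemma in_closure_of_cochain_top:
  "c \<in> cochain_top closure_of B \<longleftrightarrow> (\<forall>F. finite F \<longrightarrow> (\<exists>b\<in>B. \<forall>p\<in>F. b p = c p))"
proof
  assume c: "c \<in> cochain_top closure_of B"
  show "\<forall>F. finite F \<longrightarrow> (\<exists>b\<in>B. \<forall>p\<in>F. b p = c p)"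
  proof (intro allI impI)
    fix F :: "('a \<times> 'a) set"
    assume "finite F"
    define U where "U = {b. \<forall>p\<in>F. b p = c p}"
    have "openin cochain_top U" "c \<in> U"
      using openin_cochain_top_agree[OF \<open>finite F\<close>] by (simp_all add: U_def)
    then obtain b where "b \<in> B" "b \<in> U"
      using c unfolding in_closure_of by blast
    then show "\<exists>b\<in>B. \<forall>p\<in>F. b p = c p"
      unfolding U_def by blast
  qed
next
  assume approx: "\<forall>F. finite F \<longrightarrow> (\<exists>b\<in>B. \<forall>p\<in>F. b p = c p)"
  show "c \<in> cochain_top closure_of B"
    unfolding in_closure_of
  proof (intro conjI allI impI)
    fix T
    assume "c \<in> T \<and> openin cochain_top T"
    then obtain F where "finite F" and FT: "{b. \<forall>p\<in>F. b p = c p} \<subseteq> T"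
      using openin_cochain_top_imp_agree by blast
    then obtain b where "b \<in> B" "\<forall>p\<in>F. b p = c p"
      using approx by blast
    with FT show "\<exists>y. y \<in> B \<and> y \<in> T"
      by blast
  qed simp
qed

lemma in_closure_of_Ztop:
  assumes "B \<subseteq> Zgrp"
  shows "c \<in> Ztop closure_of B \<longleftrightarrow> c \<in> Zgrp \<and> (\<forall>F. finite F \<longrightarrow> (\<exists>b\<in>B. \<forall>p\<in>F. b p = c p))"
  using assms by (simp add: Ztop_def closure_of_subtopology Int_absorb1 in_closure_of_cochain_top)

lemma coboundary_on_cong:
  "(\<And>x y. x \<in> S \<Longrightarrow> y \<in> S \<Longrightarrow> b (x, y) = c (x, y)) \<Longrightarrow> coboundary_on S b \<Longrightarrow> coboundary_on S c"
  unfolding coboundary_on_def by auto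

lemma Bgrp_subset_Zgrp: "(Bgrp :: ('a::ab_group_add \<times> 'a \<Rightarrow> 'g::ab_group_add) set) \<subseteq> Zgrp"
proof
  fix c :: "'a \<times> 'a \<Rightarrow> 'g"
  assume "c \<in> Bgrp"
  then obtain \<phi> :: "'a \<Rightarrow> 'g" where "\<phi> 0 = 0" and "\<And>x y. c (x, y) = \<phi> y - \<phi> (x + y) + \<phi> x"
    unfolding Bgrp_def coboundary_on_def by blast
  then have "c = (\<lambda>(x, y). \<phi> y - \<phi> (x + y) + \<phi> x)"
    by auto
  with \<open>\<phi> 0 = 0\<close> show "c \<in> Zgrp"
    unfolding Zgrp_def cocycle_def by (simp add: algebra_simps)
qed

lemma Bgrp_subset_Bw_grp: "Bgrp \<subseteq> Bw_grp"
  using Bgrp_subset_Zgrp unfolding Bw_grp_def Bgrp_def coboundary_on_def by blast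

lemma closure_of_subset_Bw_grp:
  assumes "B \<subseteq> Bw_grp"
  shows "Ztop closure_of B \<subseteq> Bw_grp"
proof
  fix c
  assume "c \<in> Ztop closure_of B"
  moreover have "B \<subseteq> Zgrp"
    using assms unfolding Bw_grp_def by blast
  ultimately have c: "c \<in> Zgrp" and approx: "\<And>F. finite F \<Longrightarrow> \<exists>b\<in>B. \<forall>p\<in>F. b p = c p"
    by (simp_all add: in_closure_of_Ztop)
  have "coboundary_on S c" if "finite_subgroup S" for S
  proof -
    have "finite (S \<times> S)"
      using that by (simp add: finite_subgroup_def)
    then obtain b where "b \<in> B" and agree: "\<forall>p\<in>S \<times> S. b p = c p"
      using approx by blast
    then have "coboundary_on S b"
      using assms that unfolding Bw_grp_def by blast
    then show ?thesis
      by (rule coboundary_on_cong[rotated]) (simp add: agree)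
  qed
  with c show "c \<in> Bw_grp"
    unfolding Bw_grp_def by blast
qed

lemma coboundary_on_imp_Bgrp_agree:
  assumes "coboundary_on S c"
  shows "\<exists>b\<in>Bgrp. \<forall>x\<in>S. \<forall>y\<in>S. b (x, y) = c (x, y)"
proof -
  obtain \<phi> where "\<phi> 0 = 0" and \<phi>: "\<forall>x\<in>S. \<forall>y\<in>S. c (x, y) = \<phi> y - \<phi> (x + y) + \<phi> x"
    using assms unfolding coboundary_on_def by blast
  define b where "b p = \<phi> (snd p) - \<phi> (fst p + snd p) + \<phi> (fst p)" for p
  have "b \<in> Bgrp"
    unfolding Bgrp_def coboundary_on_def b_def using \<open>\<phi> 0 = 0\<close> by auto
  moreover have "\<forall>x\<in>S. \<forall>y\<in>S. b (x, y) = c (x, y)"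
    using \<phi> by (simp add: b_def)
  ultimately show ?thesis
    by blast
qed

lemma Bw_grp_subset_closure_of_Bgrp: "Bw_grp \<subseteq> Ztop closure_of Bgrp"
proof
  fix c :: "'a::ab_group_add \<times> 'a \<Rightarrow> 'g::ab_group_add"
  assume "c \<in> Bw_grp"
  then have c: "c \<in> Zgrp" "cocycle c" and finite: "\<And>S. finite_subgroup S \<Longrightarrow> coboundary_on S c"
    unfolding Bw_grp_def Zgrp_def by auto
  have "\<exists>b\<in>Bgrp. \<forall>p\<in>F. b p = c p" if F: "finite F" for F
  proof -
    obtain n g where X: "fst ` F \<union> snd ` F \<subseteq> zspan n g"
      using finite_subset_zspan[of "fst ` F \<union> snd ` F"] F by blast
    obtain b where "b \<in> Bgrp" and agree: "\<forall>x\<in>zspan n g. \<forall>y\<in>zspan n g. b (x, y) = c (x, y)"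
      using coboundary_on_imp_Bgrp_agree[OF coboundary_on_zspan[OF c(2) finite]] by blast
    have "b p = c p" if "p \<in> F" for p
      proof -
      have "fst p \<in> zspan n g" "snd p \<in> zspan n g"
        using X that by auto
      with agree have "b (fst p, snd p) = c (fst p, snd p)"
        by blast
      then show ?thesis
        by simp
    qed
    with \<open>b \<in> Bgrp\<close> show ?thesis
      by blast
  qed
  with c(1) show "c \<in> Ztop closure_of Bgrp"
    by (simp add: in_closure_of_Ztop[OF Bgrp_subset_Zgrp])
qed

theorem lemma3p2:
  shows "Ztop closure_of (Bgrp :: ('a::{ab_group_add,countable} \<times> 'a \<Rightarrow> 'g::{ab_group_add,countable}) set) = Bw_grp
     \<and> closedin Ztop (Bw_grp :: ('a \<times> 'a \<Rightarrow> 'g) set)"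
proof
  show "Ztop closure_of (Bgrp :: ('a \<times> 'a \<Rightarrow> 'g) set) = Bw_grp"
    using closure_of_subset_Bw_grp[OF Bgrp_subset_Bw_grp] Bw_grp_subset_closure_of_Bgrp by blast
  have "(Bw_grp :: ('a \<times> 'a \<Rightarrow> 'g) set) \<subseteq> topspace Ztop"
    by (auto simp: Bw_grp_def)
  then show "closedin Ztop (Bw_grp :: ('a \<times> 'a \<Rightarrow> 'g) set)"
    using closure_of_subset_Bw_grp[OF order_refl] closure_of_subset_eq by blast
qed

end
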